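(* Let $w_1,\ldots,w_n$ be positive weights, $W=\sum_{j=1}^n w_j$, $\tau=W/n$, $w'_i=\lceil w_i/\tau\rceil$ for each $i$, and $W'=\sum_{j=1}^n w'_j$. Let $T'$ be a tree with leaves $\ell_1,\ldots,\ell_n$ and let $c$ be a constant. If the depth of a leaf $\ell_i$ in $T'$ does not exceed $\log(W'/w'_i)+c$, then the depth of $\ell_i$ in $T'$ does not exceed $\min(\log(W/w_i),\log n)+c+1$.
   Context: $\log$ denotes the binary logarithm. *)

theory Defs
  imports Complex_Main
begin

datatype 'a rtree = Leaf 'a | Node "'a rtree list"

fun leaves :: "'a rtree \<Rightarrow> 'a set" where
  "leaves (Leaf x) = {x}"
| "leaves (Node ts) = (\<Union>t\<in>set ts. leaves t)"

inductive leaf_depth :: "'a rtree \<Rightarrow> 'a \<Rightarrow> nat \<Rightarrow> bool" where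
  leaf: "leaf_depth (Leaf x) x 0"
| node: "t \<in> set ts \<Longrightarrow> leaf_depth t x d \<Longrightarrow> leaf_depth (Node ts) x (Suc d)"

end

theory Submission
  imports Defs
begin

text \<open>Rounding \<open>w\<^sub>j / \<tau>\<close> up adds less than one per weight, and the unrounded quotients sum to
  \<open>n\<close>, so \<open>W' \<le> 2n\<close>. Since \<open>w'\<^sub>i \<ge> max 1 (w\<^sub>i / \<tau>)\<close>, this gives
  \<open>W' / w'\<^sub>i \<le> 2 min (W / w\<^sub>i) n\<close>, and taking logarithms costs exactly the extra \<open>1\<close>.\<close>

definition rounded_weight :: "('a \<Rightarrow> real) \<Rightarrow> 'a set \<Rightarrow> 'a \<Rightarrow> int" where
  "rounded_weight w A j = \<lceil>w j / (sum w A / real (card A))\<rceil>"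

lemma sum_ceiling_le:
  fixes f :: "'a \<Rightarrow> real"
  shows "(\<Sum>j\<in>A. real_of_int \<lceil>f j\<rceil>) \<le> sum f A + real (card A)"
proof (cases "finite A")
  case True
  have "(\<Sum>j\<in>A. real_of_int \<lceil>f j\<rceil>) \<le> (\<Sum>j\<in>A. f j + 1)"
    by (intro sum_mono) (simp add: ceiling_correct less_imp_le)
  then show ?thesis by (simp add: sum.distrib)
qed simp

locale positive_weights =
  fixes w :: "'a \<Rightarrow> real" and A :: "'a set"
  assumes finite: "finite A" and nonempty: "A \<noteq> {}" and pos: "\<And>j. j \<in> A \<Longrightarrow> w j > 0"
begin

abbreviation "\<tau> \<equiv> sum w A / real (card A)"

lemma total_pos: "sum w A > 0"
  using finite nonempty pos by (intro sum_pos) auto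

lemma mean_pos: "\<tau> > 0"
  using total_pos finite nonempty by (simp add: card_gt_0_iff)

lemma sum_normalized: "(\<Sum>j\<in>A. w j / \<tau>) = real (card A)"
proof -
  have "(\<Sum>j\<in>A. w j / \<tau>) = sum w A / \<tau>"
    by (simp only: sum_divide_distrib)
  also have "\<dots> = real (card A)"
    using total_pos finite nonempty by (simp add: card_gt_0_iff)
  finally show ?thesis .
qed

lemma rounded_weight_ge: "j \<in> A \<Longrightarrow> w j / \<tau> \<le> rounded_weight w A j"
  unfolding rounded_weight_def by (rule le_of_int_ceiling)

lemma rounded_weight_ge_1: "j \<in> A \<Longrightarrow> 1 \<le> rounded_weight w A j"
  using divide_pos_pos[OF pos mean_pos] unfolding rounded_weight_def by simp

lemma rounded_weight_sum_pos: "(\<Sum>j\<in>A. real_of_int (rounded_weight w A j)) > 0"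
  using finite nonempty by (intro sum_pos) (auto dest: rounded_weight_ge_1)

lemma rounded_weight_sum_le: "(\<Sum>j\<in>A. real_of_int (rounded_weight w A j)) \<le> 2 * real (card A)"
  using sum_ceiling_le[of "\<lambda>j. w j / \<tau>" A] sum_normalized
  unfolding rounded_weight_def by simp

lemma rounded_weight_ratio_le:
  assumes "i \<in> A"
  shows "(\<Sum>j\<in>A. real_of_int (rounded_weight w A j)) / rounded_weight w A i
           \<le> 2 * min (sum w A / w i) (real (card A))"
proof -
  let ?W' = "\<Sum>j\<in>A. real_of_int (rounded_weight w A j)"
  let ?v = "real_of_int (rounded_weight w A i)"
  have v: "?v \<ge> 1" "?v \<ge> w i / \<tau>"
    using rounded_weight_ge_1 rounded_weight_ge assms by auto
  have wi: "w i / \<tau> > 0"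
    using divide_pos_pos[OF pos[OF assms] mean_pos] .
  have "?W' / ?v \<le> 2 * real (card A) / (w i / \<tau>)" "?W' / ?v \<le> 2 * real (card A) / 1"
    using rounded_weight_sum_le rounded_weight_sum_pos v wi by (intro frac_le; simp)+
  moreover have "2 * real (card A) / (w i / \<tau>) = 2 * (sum w A / w i)"
    using finite nonempty by (simp add: card_gt_0_iff field_simps)
  ultimately show ?thesis by simp
qed

lemma log_rounded_weight_ratio_le:
  assumes "i \<in> A"
  shows "log 2 ((\<Sum>j\<in>A. real_of_int (rounded_weight w A j)) / rounded_weight w A i)
           \<le> min (log 2 (sum w A / w i)) (log 2 (real (card A))) + 1"
proof -
  have "0 < (\<Sum>j\<in>A. real_of_int (rounded_weight w A j)) / rounded_weight w A i"
    using rounded_weight_sum_pos rounded_weight_ge_1[OF assms] by simp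
  then have "log 2 ((\<Sum>j\<in>A. real_of_int (rounded_weight w A j)) / rounded_weight w A i)
               \<le> log 2 (2 * min (sum w A / w i) (real (card A)))"
    using rounded_weight_ratio_le[OF assms] by (intro log_mono) simp_all
  also have "\<dots> = min (log 2 (sum w A / w i)) (log 2 (real (card A))) + 1"
    using total_pos pos[OF assms] finite nonempty by (simp add: log_mult min_def card_gt_0_iff)
  finally show ?thesis .
qed

end

theorem lemma2:
  fixes n :: nat and w :: "nat \<Rightarrow> real" and T' :: "nat rtree"
    and c :: real and i :: nat and d :: nat
  assumes pos: "\<forall>j\<in>{1..n}. w j > 0"
    and i: "i \<in> {1..n}"
    and lv: "leaves T' = {1..n}"
    and dep: "leaf_depth T' i d"
    and hyp: "real d \<le> log 2 (real_of_int (\<Sum>j=1..n. \<lceil>w j / ((\<Sum>k=1..n. w k) / real n)\<rceil>)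
                             / real_of_int \<lceil>w i / ((\<Sum>k=1..n. w k) / real n)\<rceil>) + c"
  shows "real d \<le> min (log 2 ((\<Sum>k=1..n. w k) / w i)) (log 2 (real n)) + c + 1"
proof -
  interpret positive_weights w "{1..n}"
    using pos i by unfold_locales auto
  show ?thesis
    using hyp log_rounded_weight_ratio_le[OF i] by (simp add: rounded_weight_def)
qed

end
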